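(* Let $h\in R$. Then for every $i\ge1$, the binary representation of $h$ does not contain the string $1(10)^i0$ as a contiguous substring.
   Context: Stern's sequence $(a(n))_{n\ge0}$: $a(0)=0$, $a(1)=1$, $a(2n)=a(n)$, $a(2n+1)=a(n)+a(n+1)$; $s(n)=a(n+1)$ for $n\ge0$. $R$ is the set of record-setters of $s$, i.e. indices $v\ge0$ with $s(i)<s(v)$ for all $i<v$. The binary representation of a positive integer has no leading zeros; $0$ is represented by the string $0$. $x^i$ denotes $i$-fold concatenation of the string $x$. *)

theory Defs
  imports Main "HOL-Library.Sublist"
begin

function stern :: "nat \<Rightarrow> nat" where
  "stern 0 = 0"
| "stern (Suc 0) = 1"
| "n > 0 \<Longrightarrow> stern (2 * n) = stern n"
| "n > 0 \<Longrightarrow> stern (2 * n + 1) = stern n + stern (n + 1)"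
proof -
  fix P :: bool and x :: nat
  assume a: "x = 0 \<Longrightarrow> P" "x = Suc 0 \<Longrightarrow> P"
    "\<And>n. 0 < n \<Longrightarrow> x = 2 * n \<Longrightarrow> P"
    "\<And>n. 0 < n \<Longrightarrow> x = 2 * n + 1 \<Longrightarrow> P"
  show P
  proof (cases "x \<le> 1")
    case True then show ?thesis using a(1,2) by (cases x) auto
  next
    case False
    show ?thesis
    proof (cases "even x")
      case True then show ?thesis using a(3)[of "x div 2"] False by auto
    next
      case f: False show ?thesis proof (rule a(4)[of "x div 2"])
        show "0 < x div 2" using False by simp
        show "x = 2 * (x div 2) + 1" using f by presburger
      qed
    qed
  qed
qed (auto, presburger)
termination
  by (relation "measure id") auto

definition s_seq :: "nat \<Rightarrow> nat" where
  "s_seq n = stern (n + 1)"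

definition R :: "nat set" where
  "R = {v. \<forall>i<v. s_seq i < s_seq v}"

text \<open>Binary representation, most significant bit first, True = 1, False = 0;
  no leading zeros, and 0 is represented by the string "0".\<close>
fun bin_aux :: "nat \<Rightarrow> bool list" where
  "bin_aux n = (if n = 0 then [] else bin_aux (n div 2) @ [odd n])"

definition bin :: "nat \<Rightarrow> bool list" where
  "bin n = (if n = 0 then [False] else bin_aux n)"

definition pow_str :: "'a list \<Rightarrow> nat \<Rightarrow> 'a list" where
  "pow_str x i = concat (replicate i x)"

end

theory Submission
  imports Defs "HOL-Library.Product_Order"
begin

text \<open>Reading the binary digits of n from the most significant one, the pair
  (a(n), a(n+1)) evolves by (a, b) \<mapsto> (a, a + b) on a 0 and (a, b) \<mapsto> (a + b, b) on a 1,
  monotonically for the componentwise order. Replacing a factor 1(10)^i0 of the binary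
  representation of h by the equally long (10)^(i+1) decreases the number, yet the
  transformation of the pair is dominated by that of (10)^(i+1); the resulting h' < h
  then has s(h') \<ge> s(h), so h is not a record-setter.\<close>

fun stern_step :: "bool \<Rightarrow> nat \<times> nat \<Rightarrow> nat \<times> nat" where
  "stern_step False (a, b) = (a, a + b)"
| "stern_step True (a, b) = (a + b, b)"

definition nat_of_bits :: "bool list \<Rightarrow> nat" where
  "nat_of_bits w = horner_sum of_bool 2 (rev w)"

lemma nat_of_bits_Nil [simp]: "nat_of_bits [] = 0"
  by (simp add: nat_of_bits_def)

lemma nat_of_bits_append:
  "nat_of_bits (xs @ ys) = nat_of_bits xs * 2 ^ length ys + nat_of_bits ys"
  by (simp add: nat_of_bits_def horner_sum_append)

lemma nat_of_bits_Cons [simp]: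
  "nat_of_bits (b # w) = of_bool b * 2 ^ length w + nat_of_bits w"
  using nat_of_bits_append[of "[b]" w] by (simp add: nat_of_bits_def)

lemma nat_of_bits_snoc [simp]: "nat_of_bits (w @ [b]) = 2 * nat_of_bits w + of_bool b"
  by (simp add: nat_of_bits_append)

declare bin_aux.simps [simp del]

lemma nat_of_bits_bin_aux: "nat_of_bits (bin_aux n) = n"
proof (induction n rule: bin_aux.induct)
  case (1 n)
  then show ?case
    by (subst bin_aux.simps) simp
qed

lemma nat_of_bits_bin [simp]: "nat_of_bits (bin n) = n"
  by (simp add: bin_def nat_of_bits_bin_aux)

lemma nat_of_bits_replace_less:
  assumes "length u' = length u" and "nat_of_bits u' < nat_of_bits u"
  shows "nat_of_bits (x @ u' @ y) < nat_of_bits (x @ u @ y)"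
proof -
  have "nat_of_bits (u' @ y) < nat_of_bits (u @ y)"
    using assms(2) by (simp add: nat_of_bits_append)
  then show ?thesis
    using assms(1) by (simp add: nat_of_bits_append)
qed

lemma stern_step_stern_pair:
  "stern_step b (stern n, stern (n + 1)) = (stern (2 * n + of_bool b), stern (2 * n + of_bool b + 1))"
proof (cases "n = 0")
  case False
  then show ?thesis
    using stern.simps(3)[of n] stern.simps(3)[of "n + 1"] stern.simps(4)[of n]
    by (cases b) (simp_all add: algebra_simps)
next
  case True
  have "stern (Suc (Suc 0)) = 1"
    using stern.simps(3)[of 1] by (simp add: numeral_2_eq_2)
  with True show ?thesis
    by (cases b) simp_all
qed

lemma fold_stern_step_stern_pair:
  "fold stern_step w (stern n, stern (n + 1))
     = (stern (n * 2 ^ length w + nat_of_bits w), stern (n * 2 ^ length w + nat_of_bits w + 1))"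
proof (induction w arbitrary: n)
  case (Cons b w)
  have digits: "n * 2 ^ length (b # w) + nat_of_bits (b # w)
      = (2 * n + of_bool b) * 2 ^ length w + nat_of_bits w"
    by (simp add: algebra_simps)
  have "fold stern_step (b # w) (stern n, stern (n + 1))
      = fold stern_step w (stern (2 * n + of_bool b), stern (2 * n + of_bool b + 1))"
    by (simp only: fold_Cons comp_apply stern_step_stern_pair)
  also have "\<dots> = (stern ((2 * n + of_bool b) * 2 ^ length w + nat_of_bits w),
      stern ((2 * n + of_bool b) * 2 ^ length w + nat_of_bits w + 1))"
    by (rule Cons.IH)
  finally show ?case
    by (simp only: digits)
qed simp

corollary fold_stern_step_nat_of_bits:
  "fold stern_step w (0, 1) = (stern (nat_of_bits w), stern (nat_of_bits w + 1))"
  using fold_stern_step_stern_pair[of w 0] by simp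

lemma mono_fold_stern_step: "mono (fold stern_step w)"
proof (induction w)
  case (Cons b w)
  have "mono (stern_step b)"
    by (rule monoI, cases b) (auto simp: less_eq_prod_def split: prod.splits)
  with Cons.IH show ?case
    by (auto intro!: monoI dest: monoD)
qed (simp add: mono_def)

lemma stern_replace_le:
  assumes "\<And>v. fold stern_step u v \<le> fold stern_step u' v"
  shows "stern (nat_of_bits (x @ u @ y) + 1) \<le> stern (nat_of_bits (x @ u' @ y) + 1)"
proof -
  have "fold stern_step (x @ u @ y) (0, 1) \<le> fold stern_step (x @ u' @ y) (0, 1)"
    using monoD[OF mono_fold_stern_step assms[of "fold stern_step x (0, 1)"]]
    by simp
  then show ?thesis
    unfolding fold_stern_step_nat_of_bits by simp
qed

lemma pow_str_Suc: "pow_str x (Suc i) = x @ pow_str x i"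
  by (simp add: pow_str_def)

lemma length_pow_str: "length (pow_str x i) = i * length x"
  by (simp add: pow_str_def length_concat sum_list_replicate)

text \<open>The matrix of 10 is [[1,1],[1,2]], and the matrices [[p,q],[q,p+q]] are closed
  under multiplication by it.\<close>

lemma fold_stern_step_pow_10:
  obtains p q where
    "\<And>x y. fold stern_step (pow_str [True, False] i) (x, y) = (p * x + q * y, q * x + (p + q) * y)"
proof (induction i arbitrary: thesis)
  case 0
  show ?case
    by (rule 0[of 1 0]) (simp add: pow_str_def)
next
  case (Suc i)
  obtain p q where pq:
    "\<And>x y. fold stern_step (pow_str [True, False] i) (x, y) = (p * x + q * y, q * x + (p + q) * y)"
    using Suc.IH by blast
  show ?case
    by (rule Suc.prems[of "p + q" "p + 2 * q"]) (simp add: pow_str_Suc pq algebra_simps)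
qed

lemma fold_stern_step_factor_le:
  "fold stern_step ([True] @ pow_str [True, False] i @ [False]) v
     \<le> fold stern_step ([True, False] @ pow_str [True, False] i) v"
proof -
  obtain a b where v: "v = (a, b)"
    by fastforce
  obtain p q where
    "\<And>x y. fold stern_step (pow_str [True, False] i) (x, y) = (p * x + q * y, q * x + (p + q) * y)"
    using fold_stern_step_pow_10 by blast
  then show ?thesis
    by (simp add: v algebra_simps)
qed

lemma nat_of_bits_factor_less:
  assumes "i \<ge> 1"
  shows "nat_of_bits ([True, False] @ pow_str [True, False] i)
    < nat_of_bits ([True] @ pow_str [True, False] i @ [False])"
proof -
  obtain j where "i = Suc j"
    using assms by (cases i) auto
  then have "nat_of_bits (pow_str [True, False] i) > 0"
    by (simp add: pow_str_Suc)
  then show ?thesis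
    by (simp add: nat_of_bits_append)
qed

theorem mainTheorem4:
  fixes h i :: nat
  assumes "h \<in> R" and "i \<ge> 1"
  shows "\<not> sublist ([True] @ pow_str [True, False] i @ [False]) (bin h)"
proof
  let ?u = "[True] @ pow_str [True, False] i @ [False]"
  let ?u' = "[True, False] @ pow_str [True, False] i"
  assume "sublist ?u (bin h)"
  then obtain x y where "bin h = x @ ?u @ y"
    by (auto simp: sublist_def)
  then have h: "h = nat_of_bits (x @ ?u @ y)"
    by (metis nat_of_bits_bin)
  define h' where "h' = nat_of_bits (x @ ?u' @ y)"
  have "h' < h"
    unfolding h h'_def
    by (rule nat_of_bits_replace_less)
      (simp add: length_pow_str, rule nat_of_bits_factor_less[OF assms(2)])
  with assms(1) have "stern (h' + 1) < stern (h + 1)"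
    by (simp add: R_def s_seq_def)
  moreover have "stern (h + 1) \<le> stern (h' + 1)"
    unfolding h h'_def by (rule stern_replace_le[OF fold_stern_step_factor_le])
  ultimately show False
    by simp
qed

end
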